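(* Let $G$ be a localic group and $X$ a set, and let $\widehat{\mu}:G\to Rel(X)$ be a morphism of localic monoids. Then there exists a unique action of $G$ on $X$, i.e. a morphism of localic groups $\widehat{\mu}:G\to Aut(X)$, whose composite with $Aut(X)\to Rel(X)$ is the given morphism; equivalently the corresponding locale map $Rel(X)\to\mathcal{O}(G)$ factors (uniquely) through $Rel(X)\to Aut(X)$ via a Hopf algebra morphism.
   Context: Localic groups/monoids are group/monoid objects in $Loc^{op}$, i.e. Hopf algebras/bialgebras in sup-lattices whose underlying algebra is a locale (comultiplication $w$, counit $e$, antipode $\iota$). For a set $X$, $Rel(X)$ is the free locale on $X\times X$ (generators $\langle x|y\rangle$), a localic monoid with $w\langle x|y\rangle=\bigvee_z\langle x|z\rangle\otimes\langle z|y\rangle$ and $e\langle x|y\rangle=\delta_{x=y}$. $Aut(X)$ is the quotient of $Rel(X)$ forcing $X\times X\to Aut(X)$ to be an $\ell$-bijection ($\bigvee_y\langle x|y\rangle=1$, $\langle x|y_1\rangle\wedge\langle x|y_2\rangle=0$ for $y_1\ne y_2$, and the two symmetric conditions); it is a localic group with the same $w,e$ and antipode $\iota\langle x|y\rangle=\langle y|x\rangle$. An action of $G$ on $X$ is a localic group morphism $G\to Aut(X)$, i.e. a Hopf algebra morphism $Aut(X)\to\mathcal{O}(G)$. *)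

theory Defs
  imports Main
begin

unbundle lattice_syntax

definition frame_law :: "'a::complete_lattice itself \<Rightarrow> bool" where
  "frame_law _ \<longleftrightarrow> (\<forall>(a::'a) S. a \<sqinter> Sup S = Sup ((\<lambda>s. a \<sqinter> s) ` S))"

definition frame_hom :: "('a::complete_lattice \<Rightarrow> 'b::complete_lattice) \<Rightarrow> bool" where
  "frame_hom f \<longleftrightarrow> f top = top \<and> (\<forall>a b. f (a \<sqinter> b) = f a \<sqinter> f b)
      \<and> (\<forall>S. f (Sup S) = Sup (f ` S))"

text \<open>The frame A \<otimes> B (coproduct of frames, i.e. the frame of the product locale) is
  realised as the set of C-ideals of A \<times> B: down-closed subsets closed under joins in
  each coordinate separately (empty joins give (0,b) and (a,0)), ordered by inclusion.\<close>
definition cideal :: "('a::complete_lattice \<times> 'b::complete_lattice) set \<Rightarrow> bool" where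
  "cideal D \<longleftrightarrow>
     (\<forall>a b a' b'. (a, b) \<in> D \<and> a' \<le> a \<and> b' \<le> b \<longrightarrow> (a', b') \<in> D)
   \<and> (\<forall>S b. (\<forall>s\<in>S. (s, b) \<in> D) \<longrightarrow> (Sup S, b) \<in> D)
   \<and> (\<forall>a S. (\<forall>s\<in>S. (a, s) \<in> D) \<longrightarrow> (a, Sup S) \<in> D)"

definition cgen :: "('a::complete_lattice \<times> 'b::complete_lattice) set \<Rightarrow> ('a \<times> 'b) set" where
  "cgen R = \<Inter> {D. cideal D \<and> R \<subseteq> D}"

text \<open>Elementary tensor a \<otimes> b and joins in A \<otimes> B (meets are intersections).\<close>
definition tens :: "'a::complete_lattice \<Rightarrow> 'b::complete_lattice \<Rightarrow> ('a \<times> 'b) set" where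
  "tens a b = cgen {(a, b)}"

definition tsup :: "('a::complete_lattice \<times> 'b::complete_lattice) set set \<Rightarrow> ('a \<times> 'b) set" where
  "tsup Ds = cgen (\<Union> Ds)"

definition cideal3 :: "('a::complete_lattice \<times> 'a \<times> 'a) set \<Rightarrow> bool" where
  "cideal3 D \<longleftrightarrow>
     (\<forall>a b c a' b' c'. (a, b, c) \<in> D \<and> a' \<le> a \<and> b' \<le> b \<and> c' \<le> c \<longrightarrow> (a', b', c') \<in> D)
   \<and> (\<forall>S b c. (\<forall>s\<in>S. (s, b, c) \<in> D) \<longrightarrow> (Sup S, b, c) \<in> D)
   \<and> (\<forall>a S c. (\<forall>s\<in>S. (a, s, c) \<in> D) \<longrightarrow> (a, Sup S, c) \<in> D)
   \<and> (\<forall>a b S. (\<forall>s\<in>S. (a, b, s) \<in> D) \<longrightarrow> (a, b, Sup S) \<in> D)"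

definition cgen3 :: "('a::complete_lattice \<times> 'a \<times> 'a) set \<Rightarrow> ('a \<times> 'a \<times> 'a) set" where
  "cgen3 R = \<Inter> {D. cideal3 D \<and> R \<subseteq> D}"

definition comult_hom :: "('a::complete_lattice \<Rightarrow> ('a \<times> 'a) set) \<Rightarrow> bool" where
  "comult_hom w \<longleftrightarrow> (\<forall>a. cideal (w a)) \<and> w top = tens top top
     \<and> (\<forall>a b. w (a \<sqinter> b) = w a \<inter> w b) \<and> (\<forall>S. w (Sup S) = tsup (w ` S))"

text \<open>A localic group: a frame O(G) (the type 'a) with comultiplication w (the frame map of
  the multiplication G \<times> G \<rightarrow> G), counit e : O(G) \<rightarrow> \<Omega> = bool (the frame map of the
  unit point 1 \<rightarrow> G) and antipode i (the frame map of the inversion G \<rightarrow> G), satisfying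
  the group-object axioms in Loc.  Each axiom is the corresponding composite of frame
  maps, evaluated on w a = \<Squnion>{c \<otimes> b | (c,b) \<in> w a}:
  - coassociativity: (w \<otimes> id) \<circ> w = (id \<otimes> w) \<circ> w;
  - counit: (e \<otimes> id) \<circ> w = id = (id \<otimes> e) \<circ> w, using \<Omega> \<otimes> A = A;
  - antipode: \<nabla> \<circ> (i \<otimes> id) \<circ> w = (unit of \<Omega> \<rightarrow> A) \<circ> e = \<nabla> \<circ> (id \<otimes> i) \<circ> w,
    where \<nabla>(c \<otimes> b) = c \<sqinter> b is the frame map of the diagonal G \<rightarrow> G \<times> G.\<close>
definition localic_group ::
  "('a::complete_lattice \<Rightarrow> ('a \<times> 'a) set) \<Rightarrow> ('a \<Rightarrow> bool) \<Rightarrow> ('a \<Rightarrow> 'a) \<Rightarrow> bool" where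
  "localic_group w e i \<longleftrightarrow>
     frame_law TYPE('a) \<and> comult_hom w \<and> frame_hom e \<and> frame_hom i
   \<and> (\<forall>a. cgen3 {(x, y, c) | x y b c. (b, c) \<in> w a \<and> (x, y) \<in> w b}
          = cgen3 {(x, y, c) | x y b c. (x, b) \<in> w a \<and> (y, c) \<in> w b})
   \<and> (\<forall>a. Sup {b. \<exists>c. (c, b) \<in> w a \<and> e c} = a)
   \<and> (\<forall>a. Sup {c. \<exists>b. (c, b) \<in> w a \<and> e b} = a)
   \<and> (\<forall>a. Sup {i c \<sqinter> b | c b. (c, b) \<in> w a} = (if e a then top else bot))
   \<and> (\<forall>a. Sup {c \<sqinter> i b | c b. (c, b) \<in> w a} = (if e a then top else bot))"

text \<open>Rel(X) is the free frame on the generators \<langle>x|y\<rangle>, (x,y) \<in> X \<times> X, so a frame map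
  Rel(X) \<rightarrow> O(G) is the same as an assignment f of the generators.  It is a morphism of
  localic monoids G \<rightarrow> Rel(X) (a bialgebra morphism) iff it commutes with comultiplication
  and counit, which (both sides being frame maps out of Rel(X)) may be checked on generators:
  w (f(x,y)) = join over z of f(x,z) \<otimes> f(z,y)  and  e (f(x,y)) = delta(x,y).\<close>
definition rel_monoid_morphism ::
  "'x set \<Rightarrow> ('a::complete_lattice \<Rightarrow> ('a \<times> 'a) set) \<Rightarrow> ('a \<Rightarrow> bool) \<Rightarrow> ('x \<times> 'x \<Rightarrow> 'a) \<Rightarrow> bool" where
  "rel_monoid_morphism X w e f \<longleftrightarrow>
     (\<forall>x\<in>X. \<forall>y\<in>X. w (f (x, y)) = tsup ((\<lambda>z. tens (f (x, z)) (f (z, y))) ` X))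
   \<and> (\<forall>x\<in>X. \<forall>y\<in>X. e (f (x, y)) = (x = y))"

text \<open>Aut(X) is the quotient of Rel(X) by the \<ell>-bijection relations, so a frame map
  Aut(X) \<rightarrow> O(G) is the same as an assignment g of the generators satisfying these
  relations in O(G).\<close>
definition l_bijection :: "'x set \<Rightarrow> ('x \<times> 'x \<Rightarrow> 'a::complete_lattice) \<Rightarrow> bool" where
  "l_bijection X g \<longleftrightarrow>
     (\<forall>x\<in>X. Sup ((\<lambda>y. g (x, y)) ` X) = top)
   \<and> (\<forall>x\<in>X. \<forall>y1\<in>X. \<forall>y2\<in>X. y1 \<noteq> y2 \<longrightarrow> g (x, y1) \<sqinter> g (x, y2) = bot)
   \<and> (\<forall>y\<in>X. Sup ((\<lambda>x. g (x, y)) ` X) = top)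
   \<and> (\<forall>y\<in>X. \<forall>x1\<in>X. \<forall>x2\<in>X. x1 \<noteq> x2 \<longrightarrow> g (x1, y) \<sqinter> g (x2, y) = bot)"

text \<open>A morphism of localic groups G \<rightarrow> Aut(X) (Hopf algebra morphism Aut(X) \<rightarrow> O(G)):
  a frame map out of Aut(X) commuting with comultiplication, counit and antipode
  (\<iota>\<langle>x|y\<rangle> = \<langle>y|x\<rangle>), again checked on generators.\<close>
definition aut_group_morphism ::
  "'x set \<Rightarrow> ('a::complete_lattice \<Rightarrow> ('a \<times> 'a) set) \<Rightarrow> ('a \<Rightarrow> bool) \<Rightarrow> ('a \<Rightarrow> 'a)
     \<Rightarrow> ('x \<times> 'x \<Rightarrow> 'a) \<Rightarrow> bool" where
  "aut_group_morphism X w e i g \<longleftrightarrow>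
     l_bijection X g
   \<and> (\<forall>x\<in>X. \<forall>y\<in>X. w (g (x, y)) = tsup ((\<lambda>z. tens (g (x, z)) (g (z, y))) ` X))
   \<and> (\<forall>x\<in>X. \<forall>y\<in>X. e (g (x, y)) = (x = y))
   \<and> (\<forall>x\<in>X. \<forall>y\<in>X. i (g (x, y)) = g (y, x))"

end

theory Submission
  imports Defs
begin

text \<open>Regard f and \<iota> \<circ> f as X \<times> X matrices with entries in the frame O(G), multiplied by
  (P Q)(x, y) = \<Squnion> z. P(x, z) \<sqinter> Q(z, y).  Applying the antipode axioms to
  w(f(x, y)) = \<Squnion> z. f(x, z) \<otimes> f(z, y) shows that \<iota> \<circ> f is a two-sided inverse of f.
  In a frame, two mutually inverse matrices are transposes of each other: the
  off-diagonal entries of P Q vanish, so distributing P(y, x) over the row sum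
  \<Squnion> z. Q(x, z) = \<top> leaves only P(y, x) \<sqinter> Q(x, y).  Unit row and column sums together
  with these vanishing products make f an \<ell>-bijection, and \<iota>(f(x, y)) = f(y, x) is the
  antipode condition, so f itself is the required morphism G \<rightarrow> Aut(X); uniqueness is
  automatic because Aut(X) is a quotient of Rel(X).\<close>

lemma frame_inf_SUP:
  assumes "frame_law TYPE('a::complete_lattice)"
  shows "(a::'a) \<sqinter> (\<Squnion>z\<in>A. f z) = (\<Squnion>z\<in>A. a \<sqinter> f z)"
  using assms unfolding frame_law_def by (simp add: image_image)

lemma frame_SUP_inf:
  assumes "frame_law TYPE('a::complete_lattice)"
  shows "(\<Squnion>z\<in>A. f z) \<sqinter> (a::'a) = (\<Squnion>z\<in>A. f z \<sqinter> a)"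
  using frame_inf_SUP[OF assms] by (simp add: inf_commute)

text \<open>Bimorphisms A \<times> B \<rightarrow> C are the join-preserving maps out of A \<otimes> B; the group axioms
  evaluate such a map on an element D of A \<otimes> B as the join of \<phi> over the C-ideal D.\<close>

definition sup_bimorphism ::
  "('a::complete_lattice \<Rightarrow> 'b::complete_lattice \<Rightarrow> 'c::complete_lattice) \<Rightarrow> bool" where
  "sup_bimorphism \<phi> \<longleftrightarrow> (\<forall>S b. \<phi> (Sup S) b = (\<Squnion>s\<in>S. \<phi> s b))
                        \<and> (\<forall>a S. \<phi> a (Sup S) = (\<Squnion>s\<in>S. \<phi> a s))"

lemma sup_bimorphism_sup:
  assumes "sup_bimorphism \<phi>"
  shows "\<phi> (a \<squnion> a') b = \<phi> a b \<squnion> \<phi> a' b" and "\<phi> a (b \<squnion> b') = \<phi> a b \<squnion> \<phi> a b'"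
proof -
  have "\<phi> (Sup {a, a'}) b = (\<Squnion>s\<in>{a, a'}. \<phi> s b)" and "\<phi> a (Sup {b, b'}) = (\<Squnion>s\<in>{b, b'}. \<phi> a s)"
    using assms unfolding sup_bimorphism_def by blast+
  then show "\<phi> (a \<squnion> a') b = \<phi> a b \<squnion> \<phi> a' b" and "\<phi> a (b \<squnion> b') = \<phi> a b \<squnion> \<phi> a b'"
    by simp_all
qed

lemma sup_bimorphism_mono:
  assumes "sup_bimorphism \<phi>" and "a' \<le> a" and "b' \<le> b"
  shows "\<phi> a' b' \<le> \<phi> a b"
proof -
  have "\<phi> a' b' \<le> \<phi> a b'"
    by (metis assms(2) sup.absorb2 sup_bimorphism_sup(1)[OF assms(1)] sup_ge1)
  also have "\<dots> \<le> \<phi> a b"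
    by (metis assms(3) sup.absorb2 sup_bimorphism_sup(2)[OF assms(1)] sup_ge1)
  finally show ?thesis .
qed

lemma frame_sup_bimorphism_inf:
  assumes "frame_law TYPE('a::complete_lattice)"
    and "\<And>S. i (Sup S) = (\<Squnion>s\<in>S. i s :: 'a)" and "\<And>S. j (Sup S) = (\<Squnion>s\<in>S. j s :: 'a)"
  shows "sup_bimorphism (\<lambda>c b. i c \<sqinter> j b)"
  unfolding sup_bimorphism_def
  by (simp add: assms(2,3) frame_inf_SUP[OF assms(1)] frame_SUP_inf[OF assms(1)] image_image)

lemma cideal_sublevel:
  assumes "sup_bimorphism \<phi>"
  shows "cideal {(c, b). \<phi> c b \<le> M}"
  using assms sup_bimorphism_mono[OF assms] order_trans
  unfolding cideal_def sup_bimorphism_def by (fastforce simp: SUP_le_iff)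

lemma SUP_cgen:
  assumes "sup_bimorphism \<phi>"
  shows "(\<Squnion>(c, b)\<in>cgen R. \<phi> c b) = (\<Squnion>(c, b)\<in>R. \<phi> c b)"
proof (rule antisym)
  let ?M = "\<Squnion>(c, b)\<in>R. \<phi> c b"
  have "R \<subseteq> {(c, b). \<phi> c b \<le> ?M}"
    by (auto intro: SUP_upper2)
  then have "cgen R \<subseteq> {(c, b). \<phi> c b \<le> ?M}"
    using cideal_sublevel[OF assms] unfolding cgen_def by blast
  then show "(\<Squnion>(c, b)\<in>cgen R. \<phi> c b) \<le> ?M"
    by (auto intro: SUP_least)
  have "R \<subseteq> cgen R"
    unfolding cgen_def by blast
  then show "?M \<le> (\<Squnion>(c, b)\<in>cgen R. \<phi> c b)"
    by (rule SUP_subset_mono) simp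
qed

lemma SUP_tsup_tens:
  assumes "sup_bimorphism \<phi>"
  shows "(\<Squnion>(c, b)\<in>tsup ((\<lambda>z. tens (g z) (h z)) ` X). \<phi> c b) = (\<Squnion>z\<in>X. \<phi> (g z) (h z))"
  unfolding tsup_def tens_def by (simp add: SUP_cgen[OF assms] SUP_UNION)

definition matrix_prod ::
  "'x set \<Rightarrow> ('x \<times> 'x \<Rightarrow> 'a::complete_lattice) \<Rightarrow> ('x \<times> 'x \<Rightarrow> 'a) \<Rightarrow> 'x \<times> 'x \<Rightarrow> 'a" where
  "matrix_prod X P Q = (\<lambda>(x, y). \<Squnion>z\<in>X. P (x, z) \<sqinter> Q (z, y))"

definition matrix_inverse :: "'x set \<Rightarrow> ('x \<times> 'x \<Rightarrow> 'a::complete_lattice) \<Rightarrow> ('x \<times> 'x \<Rightarrow> 'a) \<Rightarrow> bool" where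
  "matrix_inverse X P Q \<longleftrightarrow> (\<forall>x\<in>X. \<forall>y\<in>X.
      matrix_prod X P Q (x, y) = (if x = y then \<top> else \<bottom>)
    \<and> matrix_prod X Q P (x, y) = (if x = y then \<top> else \<bottom>))"

lemma matrix_inverse_sym: "matrix_inverse X P Q \<Longrightarrow> matrix_inverse X Q P"
  unfolding matrix_inverse_def by blast

lemma matrix_inverse_row_Sup:
  assumes "matrix_inverse X P Q" and "x \<in> X"
  shows "(\<Squnion>z\<in>X. P (x, z)) = \<top>"
proof -
  have "\<top> = (\<Squnion>z\<in>X. P (x, z) \<sqinter> Q (z, x))"
    using assms unfolding matrix_inverse_def matrix_prod_def by auto
  also have "\<dots> \<le> (\<Squnion>z\<in>X. P (x, z))"
    by (rule SUP_mono) (blast intro: inf_le1)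
  finally show ?thesis
    by (rule top_unique[THEN iffD1])
qed

lemma matrix_inverse_column_Sup:
  assumes "matrix_inverse X P Q" and "x \<in> X"
  shows "(\<Squnion>z\<in>X. P (z, x)) = \<top>"
proof -
  have "\<top> = (\<Squnion>z\<in>X. Q (x, z) \<sqinter> P (z, x))"
    using assms unfolding matrix_inverse_def matrix_prod_def by auto
  also have "\<dots> \<le> (\<Squnion>z\<in>X. P (z, x))"
    by (rule SUP_mono) (blast intro: inf_le2)
  finally show ?thesis
    by (rule top_unique[THEN iffD1])
qed

lemma matrix_inverse_disjoint:
  assumes "matrix_inverse X P Q" and "x \<in> X" "y \<in> X" "z \<in> X" and "x \<noteq> y"
  shows "P (x, z) \<sqinter> Q (z, y) = \<bottom>"
proof -
  have "P (x, z) \<sqinter> Q (z, y) \<le> matrix_prod X P Q (x, y)"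
    unfolding matrix_prod_def using assms(4) by (auto intro: SUP_upper)
  then show ?thesis
    using assms unfolding matrix_inverse_def by (simp add: bot_unique)
qed

lemma matrix_inverse_le_transpose:
  assumes "frame_law TYPE('a::complete_lattice)"
    and "matrix_inverse X P (Q :: _ \<Rightarrow> 'a)" and "x \<in> X" "y \<in> X"
  shows "P (y, x) \<le> Q (x, y)"
proof -
  have "P (y, x) = P (y, x) \<sqinter> (\<Squnion>z\<in>X. Q (x, z))"
    using matrix_inverse_row_Sup[OF matrix_inverse_sym[OF assms(2)] assms(3)] by simp
  also have "\<dots> = (\<Squnion>z\<in>X. P (y, x) \<sqinter> Q (x, z))"
    by (rule frame_inf_SUP[OF assms(1)])
  also have "\<dots> \<le> Q (x, y)"
  proof (rule SUP_least)
    fix z assume "z \<in> X"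
    then show "P (y, x) \<sqinter> Q (x, z) \<le> Q (x, y)"
      using matrix_inverse_disjoint[OF assms(2), of y z x] assms(3,4)
      by (cases "z = y") auto
  qed
  finally show ?thesis .
qed

lemma matrix_inverse_eq_transpose:
  assumes "frame_law TYPE('a::complete_lattice)"
    and "matrix_inverse X P (Q :: _ \<Rightarrow> 'a)" and "x \<in> X" "y \<in> X"
  shows "Q (x, y) = P (y, x)"
  using assms matrix_inverse_sym[OF assms(2)]
  by (intro antisym matrix_inverse_le_transpose)

lemma matrix_inverse_l_bijection:
  assumes "frame_law TYPE('a::complete_lattice)" and "matrix_inverse X P (Q :: _ \<Rightarrow> 'a)"
  shows "l_bijection X P"
  unfolding l_bijection_def
proof (intro conjI ballI impI)
  fix x y1 y2 assume "x \<in> X" "y1 \<in> X" "y2 \<in> X" "y1 \<noteq> y2"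
  then show "P (x, y1) \<sqinter> P (x, y2) = \<bottom>"
    using matrix_inverse_disjoint[OF matrix_inverse_sym[OF assms(2)], of y1 y2 x]
      matrix_inverse_eq_transpose[OF assms, of y1 x] by simp
next
  fix y x1 x2 assume "y \<in> X" "x1 \<in> X" "x2 \<in> X" "x1 \<noteq> x2"
  then show "P (x1, y) \<sqinter> P (x2, y) = \<bottom>"
    using matrix_inverse_disjoint[OF assms(2), of x1 x2 y]
      matrix_inverse_eq_transpose[OF assms, of y x2] by simp
qed (use matrix_inverse_row_Sup[OF assms(2)] matrix_inverse_column_Sup[OF assms(2)] in auto)

lemma rel_monoid_morphism_antipode_inverse:
  assumes G: "localic_group w e i" and f: "rel_monoid_morphism X w e f"
  shows "matrix_inverse X f (i \<circ> f)"
proof -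
  have frame: "frame_law TYPE('a)"
    and i_Sup: "\<And>S. i (Sup S) = (\<Squnion>s\<in>S. i s)"
    using G unfolding localic_group_def frame_hom_def by auto
  have compr: "{\<phi> c b | c b. (c, b) \<in> D} = (\<lambda>(c, b). \<phi> c b) ` D"
    for \<phi> :: "'a \<Rightarrow> 'a \<Rightarrow> 'a" and D
    by auto
  have antipode_left: "(\<Squnion>(c, b)\<in>w a. i c \<sqinter> b) = (if e a then \<top> else \<bottom>)"
    and antipode_right: "(\<Squnion>(c, b)\<in>w a. c \<sqinter> i b) = (if e a then \<top> else \<bottom>)" for a
    using G unfolding localic_group_def compr by blast+
  have w_f: "w (f (x, y)) = tsup ((\<lambda>z. tens (f (x, z)) (f (z, y))) ` X)"
    and e_f: "e (f (x, y)) = (x = y)" if "x \<in> X" "y \<in> X" for x y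
    using f that unfolding rel_monoid_morphism_def by auto
  have id_Sup: "id (Sup S) = (\<Squnion>s\<in>S. id s)" for S :: "'a set"
    by simp
  note left = frame_sup_bimorphism_inf[OF frame i_Sup id_Sup]
    and right = frame_sup_bimorphism_inf[OF frame id_Sup i_Sup]
  have "matrix_prod X (i \<circ> f) f (x, y) = (if x = y then \<top> else \<bottom>)"
    and "matrix_prod X f (i \<circ> f) (x, y) = (if x = y then \<top> else \<bottom>)" if "x \<in> X" "y \<in> X" for x y
  proof -
    have "matrix_prod X (i \<circ> f) f (x, y) = (\<Squnion>(c, b)\<in>w (f (x, y)). i c \<sqinter> b)"
      by (simp add: matrix_prod_def w_f[OF that] SUP_tsup_tens[OF left, simplified])
    also have "\<dots> = (if x = y then \<top> else \<bottom>)"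
      by (simp add: antipode_left e_f[OF that])
    finally show "matrix_prod X (i \<circ> f) f (x, y) = (if x = y then \<top> else \<bottom>)" .
    have "matrix_prod X f (i \<circ> f) (x, y) = (\<Squnion>(c, b)\<in>w (f (x, y)). c \<sqinter> i b)"
      by (simp add: matrix_prod_def w_f[OF that] SUP_tsup_tens[OF right, simplified])
    also have "\<dots> = (if x = y then \<top> else \<bottom>)"
      by (simp add: antipode_right e_f[OF that])
    finally show "matrix_prod X f (i \<circ> f) (x, y) = (if x = y then \<top> else \<bottom>)" .
  qed
  then show ?thesis
    unfolding matrix_inverse_def by blast
qed

lemma rel_monoid_morphism_aut_group_morphism:
  assumes G: "localic_group w e i" and f: "rel_monoid_morphism X w e f"
  shows "aut_group_morphism X w e i f"
proof -
  have frame: "frame_law TYPE('a)"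
    using G unfolding localic_group_def by blast
  note inverse = rel_monoid_morphism_antipode_inverse[OF G f]
  have "i (f (x, y)) = f (y, x)" if "x \<in> X" "y \<in> X" for x y
    using matrix_inverse_eq_transpose[OF frame inverse that] by simp
  then show ?thesis
    using matrix_inverse_l_bijection[OF frame inverse] f
    unfolding aut_group_morphism_def rel_monoid_morphism_def by blast
qed

theorem mainTheorem10:
  fixes w :: "'a::complete_lattice \<Rightarrow> ('a \<times> 'a) set"
    and e :: "'a \<Rightarrow> bool" and i :: "'a \<Rightarrow> 'a"
    and X :: "'x set" and f :: "'x \<times> 'x \<Rightarrow> 'a"
  assumes "localic_group w e i"
    and "rel_monoid_morphism X w e f"
  shows "\<exists>g. aut_group_morphism X w e i g \<and> (\<forall>x\<in>X. \<forall>y\<in>X. g (x, y) = f (x, y))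
           \<and> (\<forall>g'. aut_group_morphism X w e i g' \<and> (\<forall>x\<in>X. \<forall>y\<in>X. g' (x, y) = f (x, y))
                  \<longrightarrow> (\<forall>x\<in>X. \<forall>y\<in>X. g' (x, y) = g (x, y)))"
  using rel_monoid_morphism_aut_group_morphism[OF assms] by blast

end
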